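(* Let $S$ be a nonempty compact convex set in the plane and fix $0<\alpha<\pi$. Then there exist a point $O$ in the plane and two rays $q$ and $r$ emanating from $O$ and forming an angle $\alpha$, such that $S$ is contained in the closed convex wedge bounded by $q$ and $r$, the ray $q$ meets $S$ in exactly one point $X$, the ray $r$ meets $S$ in exactly one point $Y$, and $|OX|=|OY|$. *)

theory Defs
  imports "HOL-Analysis.Analysis"
begin

definition ray :: "real^2 \<Rightarrow> real^2 \<Rightarrow> (real^2) set" where
  "ray P d = {P + t *\<^sub>R d | t. t \<ge> 0}"

definition vangle :: "real^2 \<Rightarrow> real^2 \<Rightarrow> real" where
  "vangle u v = arccos ((u \<bullet> v) / (norm u * norm v))"

definition wedge :: "real^2 \<Rightarrow> real^2 \<Rightarrow> real^2 \<Rightarrow> (real^2) set" where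
  "wedge P u v = {P + s *\<^sub>R u + t *\<^sub>R v | s t. 0 \<le> s \<and> 0 \<le> t}"

end

theory Submission
  imports Defs "HOL-Library.Periodic_Fun"
begin

(*
  Describe S by its support function h(\<phi>) = max {p \<bullet> e(\<phi>) | p \<in> S}, where
  e(\<phi>) = (cos \<phi>, sin \<phi>).  A wedge of opening \<alpha> around S is bounded by two support lines
  with outer normals e(t) and e(t + \<gamma>), \<gamma> = \<pi> + \<alpha>; its edges point along
  u = e(t + \<pi>/2) and v = e(t + \<pi>/2 + \<alpha>).  Consider the 2\<pi>-periodic continuous function
      B(t) = -(h t + h (t + \<gamma>)) - k \<integral>[t, t + \<gamma>] h,     k = (1 - cos \<alpha>) / sin \<alpha>,
  and let t be a global minimum.  For contact points X, Y of the two support lines,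
  the smooth function obtained by replacing h t, h (t + \<gamma>) with X \<bullet> e(\<phi>), Y \<bullet> e(\<phi> + \<gamma>)
  lies above B and touches it at t, so its derivative vanishes there:
      X \<bullet> u - Y \<bullet> v = k (h t - h (t + \<gamma>))          ("balance").
  As this holds for EVERY pair of contact points, each support line meets S in a single
  point; and since the apex P of the wedge satisfies the same identity, X and Y are
  equidistant from P.
*)

definition dir :: "real \<Rightarrow> real^2" where
  "dir \<phi> = vector [cos \<phi>, sin \<phi>]"

lemma inner_dir: "p \<bullet> dir \<phi> = p$1 * cos \<phi> + p$2 * sin \<phi>"
  by (simp add: dir_def inner_vec_def sum_2)

lemma inner_dir_dir: "dir a \<bullet> dir b = cos (a - b)"
  unfolding inner_dir by (simp add: dir_def cos_diff)

lemma norm_dir [simp]: "norm (dir \<phi>) = 1"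
  by (simp add: norm_eq_sqrt_inner inner_dir_dir)

lemma dir_nonzero: "dir \<phi> \<noteq> 0"
  using norm_dir[of \<phi>] by (metis norm_zero zero_neq_one)

lemma dir_add_pi: "dir (\<phi> + pi) = - dir \<phi>"
  by (simp add: dir_def vec_eq_iff forall_2)

lemma dir_periodic: "dir (\<phi> + 2 * pi) = dir \<phi>"
  by (simp add: dir_def)

lemma isCont_dir: "isCont dir \<phi>"
  unfolding isCont_def
proof (rule vec_tendstoI)
  fix i :: 2
  consider "i = 1" | "i = 2" using exhaust_2 by blast
  then show "((\<lambda>x. dir x $ i) \<longlongrightarrow> dir \<phi> $ i) (at \<phi>)"
    by cases (simp_all add: dir_def continuous_at[symmetric])
qed

lemma inner_dir_has_derivative:
  "((\<lambda>\<phi>. p \<bullet> dir \<phi>) has_real_derivative p \<bullet> dir (\<phi> + pi/2)) (at \<phi>)"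
  unfolding inner_dir by (auto intro!: derivative_eq_intros simp: cos_add sin_add)

lemma vangle_dir:
  assumes "0 \<le> \<alpha>" "\<alpha> \<le> pi"
  shows "vangle (dir \<theta>) (dir (\<theta> + \<alpha>)) = \<alpha>"
  using assms by (simp add: vangle_def inner_dir_dir arccos_cos)

(* Coordinates of a vector w.r.t. the edge directions u = e(t + \<pi>/2), v = e(t + \<pi>/2 + \<alpha>),
   expressed through the normals e(t + \<pi> + \<alpha>) (orthogonal to v) and e(t) (orthogonal to u). *)
lemma dir_coordinates:
  assumes "sin \<alpha> \<noteq> 0"
  shows "w = (- (w \<bullet> dir (t + pi + \<alpha>)) / sin \<alpha>) *\<^sub>R dir (t + pi/2)
           + (- (w \<bullet> dir t) / sin \<alpha>) *\<^sub>R dir (t + pi/2 + \<alpha>)"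
  using assms unfolding vec_eq_iff forall_2 inner_dir
  by (simp add: dir_def cos_add sin_add)
    (simp add: field_simps; insert sin_cos_squared_add[of t] sin_cos_squared_add[of \<alpha>]; algebra)

(* The apex itself satisfies the balance identity with k = tan(\<alpha>/2). *)
lemma apex_of_two_lines:
  fixes t \<alpha> h1 h2 :: real
  defines "u \<equiv> dir (t + pi/2)" and "v \<equiv> dir (t + pi/2 + \<alpha>)"
  assumes "sin \<alpha> \<noteq> 0"
  obtains P where "P \<bullet> dir t = h1" "P \<bullet> dir (t + pi + \<alpha>) = h2"
    and "P \<bullet> u - P \<bullet> v = (1 - cos \<alpha>) / sin \<alpha> * (h1 - h2)"
    and "\<And>p. p = P + ((h2 - p \<bullet> dir (t + pi + \<alpha>)) / sin \<alpha>) *\<^sub>R u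
                    + ((h1 - p \<bullet> dir t) / sin \<alpha>) *\<^sub>R v"
proof
  define P where "P = (- h2 / sin \<alpha>) *\<^sub>R u + (- h1 / sin \<alpha>) *\<^sub>R v"
  have uv: "u \<bullet> dir t = 0" "v \<bullet> dir t = - sin \<alpha>" "u \<bullet> dir (t + pi + \<alpha>) = - sin \<alpha>"
    "v \<bullet> dir (t + pi + \<alpha>) = 0" "u \<bullet> u = 1" "v \<bullet> v = 1" "u \<bullet> v = cos \<alpha>" "v \<bullet> u = cos \<alpha>"
    unfolding u_def v_def inner_dir_dir by (simp_all add: cos_add cos_diff)
  show "P \<bullet> dir t = h1" "P \<bullet> dir (t + pi + \<alpha>) = h2"
    using assms(3) by (simp_all add: P_def inner_diff_left uv)
  show "P \<bullet> u - P \<bullet> v = (1 - cos \<alpha>) / sin \<alpha> * (h1 - h2)"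
    using assms(3) by (simp add: P_def inner_diff_left uv field_simps)
  show "p = P + ((h2 - p \<bullet> dir (t + pi + \<alpha>)) / sin \<alpha>) *\<^sub>R u
              + ((h1 - p \<bullet> dir t) / sin \<alpha>) *\<^sub>R v" for p
    using dir_coordinates[OF assms(3), of p t] unfolding P_def u_def v_def
    by (simp add: diff_divide_distrib algebra_simps)
qed

lemma ray_inter_single_contact:
  fixes S :: "(real^2) set"
  assumes "u \<bullet> u = 1" "u \<bullet> n = 0" "P \<bullet> n = h"
    and X: "X \<in> S" "X = P + a *\<^sub>R u" "0 \<le> a"
    and unique: "\<And>Z. Z \<in> S \<Longrightarrow> Z \<bullet> n = h \<Longrightarrow> Z \<bullet> u = X \<bullet> u"
  shows "ray P u \<inter> S = {X}"
proof
  show "{X} \<subseteq> ray P u \<inter> S" unfolding ray_def using X by auto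
  show "ray P u \<inter> S \<subseteq> {X}"
  proof
    fix Z assume "Z \<in> ray P u \<inter> S"
    then obtain r where Z: "Z = P + r *\<^sub>R u" "Z \<in> S" unfolding ray_def by auto
    have "Z \<bullet> n = h" using assms(2,3) by (simp add: Z(1) inner_add_left)
    then have "Z \<bullet> u = X \<bullet> u" using unique Z(2) by blast
    then have "r = a" using assms(1) by (simp add: Z(1) X(2) inner_add_left)
    then show "Z \<in> {X}" using Z(1) X(2) by simp
  qed
qed

lemma wedge_from_balanced_support_lines:
  fixes S :: "(real^2) set" and t \<alpha> h1 h2 :: real
  defines "n1 \<equiv> dir t" and "n2 \<equiv> dir (t + pi + \<alpha>)"
    and "u \<equiv> dir (t + pi/2)" and "v \<equiv> dir (t + pi/2 + \<alpha>)"
  assumes \<alpha>: "0 < \<alpha>" "\<alpha> < pi"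
    and below1: "\<And>p. p \<in> S \<Longrightarrow> p \<bullet> n1 \<le> h1" and below2: "\<And>p. p \<in> S \<Longrightarrow> p \<bullet> n2 \<le> h2"
    and X: "X \<in> S" "X \<bullet> n1 = h1" and Y: "Y \<in> S" "Y \<bullet> n2 = h2"
    and balanced: "\<And>X' Y'. X' \<in> S \<Longrightarrow> X' \<bullet> n1 = h1 \<Longrightarrow> Y' \<in> S \<Longrightarrow> Y' \<bullet> n2 = h2 \<Longrightarrow>
                     X' \<bullet> u - Y' \<bullet> v = (1 - cos \<alpha>) / sin \<alpha> * (h1 - h2)"
  shows "\<exists>P. S \<subseteq> wedge P u v \<and> ray P u \<inter> S = {X} \<and> ray P v \<inter> S = {Y} \<and> dist P X = dist P Y"
proof -
  have sin: "sin \<alpha> > 0" using \<alpha> by (simp add: sin_gt_zero)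
  define a where "a p = (h2 - p \<bullet> n2) / sin \<alpha>" for p
  define b where "b p = (h1 - p \<bullet> n1) / sin \<alpha>" for p
  obtain P where P1: "P \<bullet> n1 = h1" and P2: "P \<bullet> n2 = h2"
    and P_balanced: "P \<bullet> u - P \<bullet> v = (1 - cos \<alpha>) / sin \<alpha> * (h1 - h2)"
    and decomp: "\<And>p. p = P + a p *\<^sub>R u + b p *\<^sub>R v"
    unfolding a_def b_def
    by (rule apex_of_two_lines[of \<alpha> t h1 h2, folded u_def v_def n1_def n2_def]) (use sin in auto)
  have unit: "u \<bullet> u = 1" "v \<bullet> v = 1" and normal: "u \<bullet> n1 = 0" "v \<bullet> n2 = 0"
    unfolding u_def v_def n1_def n2_def inner_dir_dir by (simp_all add: cos_diff)
  have coords_nonneg: "0 \<le> a p" "0 \<le> b p" if "p \<in> S" for p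
    using below1[OF that] below2[OF that] sin by (simp_all add: a_def b_def)
  have X_on_ray: "X = P + a X *\<^sub>R u" using decomp[of X] X(2) by (simp add: b_def)
  have Y_on_ray: "Y = P + b Y *\<^sub>R v" using decomp[of Y] Y(2) by (simp add: a_def)
  have "S \<subseteq> wedge P u v"
  proof
    fix p assume "p \<in> S"
    then show "p \<in> wedge P u v"
      unfolding wedge_def by (intro CollectI exI[of _ "a p"] exI[of _ "b p"] conjI decomp coords_nonneg)
  qed
  moreover have "ray P u \<inter> S = {X}"
    using balanced[OF X Y] balanced[OF _ _ Y]
    by (intro ray_inter_single_contact[OF unit(1) normal(1) P1 X(1) X_on_ray coords_nonneg(1)[OF X(1)]])
      fastforce
  moreover have "ray P v \<inter> S = {Y}"
    using balanced[OF X Y] balanced[OF X]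
    by (intro ray_inter_single_contact[OF unit(2) normal(2) P2 Y(1) Y_on_ray coords_nonneg(2)[OF Y(1)]])
      fastforce
  moreover have "dist P X = dist P Y"
  proof -
    have "norm u = 1" "norm v = 1" using unit by (simp_all add: norm_eq_sqrt_inner)
    then have "norm (a X *\<^sub>R u) = a X" "norm (b Y *\<^sub>R v) = b Y"
      using coords_nonneg[OF X(1)] coords_nonneg[OF Y(1)] by simp_all
    then have "dist P X = a X" "dist P Y = b Y"
      using X_on_ray Y_on_ray by (metis add_diff_cancel_left' dist_commute dist_norm)+
    moreover have "X \<bullet> u = P \<bullet> u + a X" "Y \<bullet> v = P \<bullet> v + b Y"
      using arg_cong[OF X_on_ray, of "\<lambda>w. w \<bullet> u"] arg_cong[OF Y_on_ray, of "\<lambda>w. w \<bullet> v"] unit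
      by (simp_all add: inner_add_left)
    ultimately show ?thesis using balanced[OF X Y] P_balanced by simp
  qed
  ultimately show ?thesis by blast
qed

definition support :: "(real^2) set \<Rightarrow> real \<Rightarrow> real" where
  "support S \<phi> = Sup ((\<lambda>p. p \<bullet> dir \<phi>) ` S)"

lemma support_upper:
  assumes "compact S" "p \<in> S"
  shows "p \<bullet> dir \<phi> \<le> support S \<phi>"
proof -
  have "compact ((\<lambda>p. p \<bullet> dir \<phi>) ` S)"
    by (intro compact_continuous_image assms continuous_intros)
  then have "bdd_above ((\<lambda>p. p \<bullet> dir \<phi>) ` S)"
    by (simp add: bounded_imp_bdd_above compact_imp_bounded)
  then show ?thesis unfolding support_def by (intro cSup_upper) (use assms in auto)
qed

lemma support_attained:
  assumes "compact S" "S \<noteq> {}"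
  obtains p where "p \<in> S" "p \<bullet> dir \<phi> = support S \<phi>"
proof -
  have "continuous_on S (\<lambda>p. p \<bullet> dir \<phi>)" by (intro continuous_intros)
  then obtain p where p: "p \<in> S" "\<forall>q\<in>S. q \<bullet> dir \<phi> \<le> p \<bullet> dir \<phi>"
    using continuous_attains_sup[OF assms] by blast
  have "support S \<phi> = p \<bullet> dir \<phi>" unfolding support_def
    by (rule cSup_eq_maximum) (use p in auto)
  with p that show ?thesis by simp
qed

lemma support_periodic: "support S (\<phi> + 2 * pi) = support S \<phi>"
  by (simp add: support_def dir_periodic)

lemma support_lipschitz:
  assumes "compact S" "S \<noteq> {}" "\<And>p. p \<in> S \<Longrightarrow> norm p \<le> B"
  shows "support S x - support S y \<le> B * dist (dir x) (dir y)"
proof -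
  obtain p where p: "p \<in> S" "p \<bullet> dir x = support S x" using support_attained[OF assms(1,2)] .
  have "support S x - support S y \<le> p \<bullet> dir x - p \<bullet> dir y"
    using p support_upper[OF assms(1) p(1), of y] by simp
  also have "\<dots> = p \<bullet> (dir x - dir y)" by (simp add: inner_diff_right)
  also have "\<dots> \<le> norm p * norm (dir x - dir y)" by (rule norm_cauchy_schwarz)
  also have "\<dots> \<le> B * dist (dir x) (dir y)"
    by (simp add: dist_norm assms(3)[OF p(1)] mult_right_mono)
  finally show ?thesis .
qed

lemma support_continuous:
  assumes "compact S" "S \<noteq> {}"
  shows "isCont (support S) \<phi>"
proof -
  obtain B where B: "\<And>p. p \<in> S \<Longrightarrow> norm p \<le> B"
    using compact_imp_bounded[OF assms(1)] by (auto simp: bounded_iff)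
  have bound: "norm (support S x - support S \<phi>) \<le> B * dist (dir x) (dir \<phi>)" for x
  proof -
    have "support S x - support S \<phi> \<le> B * dist (dir x) (dir \<phi>)"
      "support S \<phi> - support S x \<le> B * dist (dir x) (dir \<phi>)"
      using support_lipschitz[OF assms B, of x \<phi>] support_lipschitz[OF assms B, of \<phi> x]
        dist_commute[of "dir \<phi>" "dir x"] by simp_all
    then show ?thesis by (simp add: abs_le_iff)
  qed
  have "((\<lambda>x. B * dist (dir x) (dir \<phi>)) \<longlongrightarrow> B * dist (dir \<phi>) (dir \<phi>)) (at \<phi>)"
    using isCont_dir[of \<phi>, unfolded isCont_def] by (intro tendsto_intros)
  then have lim: "((\<lambda>x. B * dist (dir x) (dir \<phi>)) \<longlongrightarrow> 0) (at \<phi>)" by simp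
  have "((\<lambda>x. support S x - support S \<phi>) \<longlongrightarrow> 0) (at \<phi>)"
    by (rule Lim_null_comparison[OF always_eventually lim]) (use bound in simp)
  then show ?thesis unfolding isCont_def by (rule Lim_null[THEN iffD2])
qed

(* Derivative of an integral over a moving window [s, s + \<gamma>] (fundamental theorem of calculus at
   both ends, using the primitive from a base point left of t). *)
lemma integral_window_has_derivative:
  fixes g :: "real \<Rightarrow> real"
  assumes cont: "\<And>x. isCont g x" and "0 \<le> \<gamma>"
  shows "((\<lambda>s. integral {s..s + \<gamma>} g) has_real_derivative g (t + \<gamma>) - g t) (at t)"
proof -
  define F where "F y = integral {t - 1..y} g" for y
  have cont_on: "continuous_on A g" for A
    using cont by (simp add: continuous_at_imp_continuous_on)
  have F_deriv: "(F has_real_derivative g x) (at x)" if "t - 1 < x" for x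
  proof -
    have "(F has_real_derivative g x) (at x within {t - 1..x + 1})"
      unfolding F_def by (rule integral_has_real_derivative[OF cont_on]) (use that in auto)
    moreover have "at x within {t - 1..x + 1} = at x" by (rule at_within_Icc_at) (use that in auto)
    ultimately show ?thesis by simp
  qed
  have window: "integral {s..s + \<gamma>} g = F (s + \<gamma>) - F s" if "t - 1 < s" for s
    using Henstock_Kurzweil_Integration.integral_combine[where a = "t - 1" and c = s and b = "s + \<gamma>" and f = g]
      integrable_continuous_real[OF cont_on] that assms(2)
    unfolding F_def by simp
  have "((\<lambda>s. F (s + \<gamma>) - F s) has_real_derivative g (t + \<gamma>) - g t) (at t)"
    using F_deriv[of "t + \<gamma>"] F_deriv[of t] assms(2)
    by (intro DERIV_diff) (auto simp: DERIV_shift)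
  then show ?thesis
    by (rule has_field_derivative_transform_within_open[where S = "{t - 1<..}"]) (auto simp: window)
qed

lemma integral_window_periodic:
  fixes g :: "real \<Rightarrow> real"
  assumes "\<And>x. g (x + p) = g x"
  shows "integral {s + p..s + p + \<gamma>} g = integral {s..s + \<gamma>} g"
proof -
  have "g \<circ> (+) p = g" by (rule ext) (simp add: assms add.commute[of p])
  then show ?thesis using integral_shift_Icc_real[of s "s + \<gamma>" g p] by (simp add: add_ac)
qed

(* A continuous periodic function on the reals attains a global minimum: minimise over one
   period and translate. *)
lemma periodic_attains_min:
  fixes f :: "real \<Rightarrow> real"
  assumes "periodic_fun_simple f p" "0 < p" "continuous_on UNIV f"
  obtains t where "\<And>y. f t \<le> f y"
proof -
  interpret periodic_fun_simple f p by (rule assms(1))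
  have "continuous_on {0..p} f" by (rule continuous_on_subset[OF assms(3)]) simp
  moreover have "{0..p} \<noteq> {}" using assms(2) by simp
  ultimately obtain t where t: "\<forall>z\<in>{0..p}. f t \<le> f z"
    using continuous_attains_inf[OF compact_Icc] by blast
  have "f t \<le> f y" for y
  proof -
    define n where "n = \<lfloor>y / p\<rfloor>"
    have "of_int n \<le> y / p" "y / p < of_int n + 1"
      unfolding n_def by linarith+
    then have "y - of_int n * p \<in> {0..p}"
      using assms(2) by (simp add: pos_le_divide_eq pos_divide_less_eq algebra_simps)
    moreover have "f (y - of_int n * p) = f y"
      by (rule minus_of_int)
    ultimately show ?thesis using t by metis
  qed
  then show ?thesis using that by blast
qed

definition balance :: "(real^2) set \<Rightarrow> real \<Rightarrow> real \<Rightarrow> real \<Rightarrow> real" where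
  "balance S k \<gamma> t = - (support S t + support S (t + \<gamma>)) - k * integral {t..t + \<gamma>} (support S)"

lemma balance_continuous:
  assumes "compact S" "S \<noteq> {}" "0 \<le> \<gamma>"
  shows "continuous_on UNIV (balance S k \<gamma>)"
proof (rule continuous_at_imp_continuous_on, intro ballI)
  fix t :: real
  have "isCont (\<lambda>s. integral {s..s + \<gamma>} (support S)) t"
    using integral_window_has_derivative[OF support_continuous[OF assms(1,2)] assms(3)]
    by (rule DERIV_isCont)
  moreover have "isCont (\<lambda>s. support S (s + \<gamma>)) t"
    by (rule isCont_o2[OF _ support_continuous[OF assms(1,2)]]) (intro continuous_intros)
  ultimately show "isCont (balance S k \<gamma>) t"
    unfolding balance_def using support_continuous[OF assms(1,2)] by (intro continuous_intros)
qed

lemma balance_periodic: "periodic_fun_simple (balance S k \<gamma>) (2 * pi)"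
proof
  fix t
  have "support S (t + 2 * pi + \<gamma>) = support S (t + \<gamma>)"
    using support_periodic[of S "t + \<gamma>"] by (simp add: add_ac)
  moreover have "integral {t + 2 * pi..t + 2 * pi + \<gamma>} (support S) = integral {t..t + \<gamma>} (support S)"
    by (rule integral_window_periodic) (rule support_periodic)
  ultimately show "balance S k \<gamma> (t + 2 * pi) = balance S k \<gamma> t"
    unfolding balance_def support_periodic by simp
qed

(* At a global minimum t of B, every pair of contact points X, Y satisfies the balance
   identity: the comparison function g (X, Y frozen) lies above B and touches it at t, so
   g'(t) = 0. *)
lemma balance_stationary:
  assumes S: "compact S" "S \<noteq> {}" and "0 \<le> \<gamma>"
    and t_min: "\<And>y. balance S k \<gamma> t \<le> balance S k \<gamma> y"
    and X: "X \<in> S" "X \<bullet> dir t = support S t"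
    and Y: "Y \<in> S" "Y \<bullet> dir (t + \<gamma>) = support S (t + \<gamma>)"
  shows "X \<bullet> dir (t + pi/2) + Y \<bullet> dir (t + \<gamma> + pi/2) = k * (support S t - support S (t + \<gamma>))"
proof -
  define g where
    "g \<phi> = - (X \<bullet> dir \<phi> + Y \<bullet> dir (\<phi> + \<gamma>)) - k * integral {\<phi>..\<phi> + \<gamma>} (support S)" for \<phi>
  have "balance S k \<gamma> \<phi> \<le> g \<phi>" for \<phi>
    using support_upper[OF S(1) X(1), of \<phi>] support_upper[OF S(1) Y(1), of "\<phi> + \<gamma>"]
    unfolding g_def balance_def by linarith
  moreover have "g t = balance S k \<gamma> t" unfolding g_def balance_def using X Y by simp
  ultimately have g_min: "\<forall>y. \<bar>t - y\<bar> < 1 \<longrightarrow> g t \<le> g y"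
    using t_min order_trans by metis
  have dY: "((\<lambda>\<phi>. Y \<bullet> dir (\<phi> + \<gamma>)) has_real_derivative Y \<bullet> dir (t + \<gamma> + pi/2)) (at t)"
    using inner_dir_has_derivative[of Y "t + \<gamma>"] by (simp add: DERIV_shift)
  have "(g has_real_derivative - (X \<bullet> dir (t + pi/2) + Y \<bullet> dir (t + \<gamma> + pi/2))
          - k * (support S (t + \<gamma>) - support S t)) (at t)"
    unfolding g_def
    by (intro DERIV_diff DERIV_minus DERIV_add DERIV_cmult inner_dir_has_derivative dY
        integral_window_has_derivative support_continuous S assms(3))
  from DERIV_local_min[OF this zero_less_one g_min] show ?thesis
    by (simp add: algebra_simps)
qed

theorem lemma2:
  fixes S :: "(real^2) set" and \<alpha> :: real
  assumes "S \<noteq> {}" and "compact S" and "convex S"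
    and "0 < \<alpha>" and "\<alpha> < pi"
  shows "\<exists>P u v. u \<noteq> 0 \<and> v \<noteq> 0 \<and> vangle u v = \<alpha> \<and> S \<subseteq> wedge P u v \<and>
           (\<exists>X Y. ray P u \<inter> S = {X} \<and> ray P v \<inter> S = {Y} \<and> dist P X = dist P Y)"
proof -
  define k where "k = (1 - cos \<alpha>) / sin \<alpha>"
  have \<gamma>: "0 \<le> pi + \<alpha>" and shift: "\<And>t. t + (pi + \<alpha>) = t + pi + \<alpha>"
    using assms(4) by simp_all
  obtain t where t_min: "\<And>y. balance S k (pi + \<alpha>) t \<le> balance S k (pi + \<alpha>) y"
    using periodic_attains_min[OF balance_periodic _ balance_continuous[OF assms(2,1) \<gamma>]] by auto
  obtain X where X: "X \<in> S" "X \<bullet> dir t = support S t"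
    using support_attained[OF assms(2,1)] .
  obtain Y where Y: "Y \<in> S" "Y \<bullet> dir (t + pi + \<alpha>) = support S (t + pi + \<alpha>)"
    using support_attained[OF assms(2,1)] .
  have balanced: "X' \<bullet> dir (t + pi/2) - Y' \<bullet> dir (t + pi/2 + \<alpha>) = k * (support S t - support S (t + pi + \<alpha>))"
    if "X' \<in> S" "X' \<bullet> dir t = support S t" "Y' \<in> S" "Y' \<bullet> dir (t + pi + \<alpha>) = support S (t + pi + \<alpha>)"
    for X' Y'
  proof -
    have "dir (t + (pi + \<alpha>) + pi/2) = - dir (t + pi/2 + \<alpha>)"
      using dir_add_pi[of "t + pi/2 + \<alpha>"] by (simp add: add_ac)
    then show ?thesis
      using balance_stationary[OF assms(2,1) \<gamma> t_min, of X' Y'] that unfolding shift by simp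
  qed
  have below: "\<And>p. p \<in> S \<Longrightarrow> p \<bullet> dir \<phi> \<le> support S \<phi>" for \<phi>
    using support_upper[OF assms(2)] .
  obtain P where P: "S \<subseteq> wedge P (dir (t + pi/2)) (dir (t + pi/2 + \<alpha>))"
      "ray P (dir (t + pi/2)) \<inter> S = {X}" "ray P (dir (t + pi/2 + \<alpha>)) \<inter> S = {Y}"
      "dist P X = dist P Y"
    using wedge_from_balanced_support_lines[OF assms(4,5) below below X Y balanced[unfolded k_def]]
    by blast
  have "vangle (dir (t + pi/2)) (dir (t + pi/2 + \<alpha>)) = \<alpha>"
    using assms(4,5) by (simp add: vangle_dir)
  with P show ?thesis using dir_nonzero by blast
qed

end
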